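(* Let $A\in\mathbb{R}^{N\times N}$, $C\in\mathbb{R}^{N\times D}$, $K<\min(N,D)$, $\alpha,\beta>0$ and $\mu=1$. Consider the joint loss $$\mathcal{L}(G,H,U,V,W,O)=\mathcal{L}_{str}+\alpha\,\mathcal{L}_{attr}+\beta\,\mathcal{L}_{dis},$$ where $$\mathcal{L}_{str}=\sum_{i=1}^N\sum_{j=1}^N\log\!\Big(\tfrac{1}{O_{1i}}\Big)\big(A_{ij}-(GH)_{ij}\big)^2,\qquad \mathcal{L}_{attr}=\sum_{i=1}^N\sum_{d=1}^D\log\!\Big(\tfrac{1}{O_{2i}}\Big)\big(C_{id}-(UV)_{id}\big)^2,$$ $$\mathcal{L}_{dis}=\sum_{i=1}^N\sum_{k=1}^K\log\!\Big(\tfrac{1}{O_{3i}}\Big)\big(G_{ik}-(UW^T)_{ik}\big)^2,$$ with $G,U\in\mathbb{R}^{N\times K}$, $H\in\mathbb{R}^{K\times N}$, $V\in\mathbb{R}^{K\times D}$, $W\in\mathbb{R}^{K\times K}$ orthogonal ($W^TW=I$), and $O=(O_{1i},O_{2i},O_{3i})_{i=1}^N$ satisfying $0<O_{ri}\le 1$ and $\sum_{i=1}^N O_{ri}=\mu$ for $r=1,2,3$. One iteration of ONE performs, in order: (i) replace $W$ by $XY^T$, where $X\Sigma Y^T$ is a singular value decomposition of $\bar G^T\bar U$, with $\bar G_{ik}=\sqrt{\log(1/O_{3i})}\,G_{ik}$ and $\bar U_{ik}=\sqrt{\log(1/O_{3i})}\,U_{ik}$; (ii) replace, one scalar entry at a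 time, each entry of $G$, $H$, $U$, $V$ by the value minimizing $\mathcal{L}$ in that entry with all other variables fixed; (iii) replace the outlier scores by $$O_{1i}=\frac{\mu\sum_{j}(A_{ij}-(GH)_{ij})^2}{\sum_{i',j}(A_{i'j}-(GH)_{i'j})^2},\quad O_{2i}=\frac{\mu\sum_{d}(C_{id}-(UV)_{id})^2}{\sum_{i',d}(C_{i'd}-(UV)_{i'd})^2},\quad O_{3i}=\frac{\mu\sum_{k}(G_{ik}-(UW^T)_{ik})^2}{\sum_{i',k}(G_{i'k}-(UW^T)_{i'k})^2}.$$ Assume that throughout, every row residual appearing in the numerators in (iii) is strictly positive (so that all scores lie in $(0,1]$, except that a score equal to $1$ makes the corresponding weight $0$, which is allowed), and that the minimizers in (ii) exist (e.g. the relevant denominators are positive). Then the value of $\mathcal{L}$ after one iteration is no larger than its value before the iteration; i.e. $\mathcal{L}$ is non-increasing along the iterations of ONE.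
   Context: ONE (Outlier aware Network Embedding) is an alternating minimization scheme for an attributed network with adjacency matrix $A$ (row $i$ describes node $v_i$'s neighbors) and attribute matrix $C$ (row $i$ is the attribute vector of node $v_i$). $G$ is the structural embedding, $U$ the attribute embedding, $W$ an orthogonal map aligning the two embedding spaces, and $O_{1i},O_{2i},O_{3i}$ are the structural, attribute and disagreement outlier scores of node $v_i$. $\mu$ is the total outlier score, set to $1$. *)

theory Defs
  imports Complex_Main
begin

text \<open>Real matrices are represented as functions nat => nat => real; only the
  entries inside the stated index ranges are ever used.\<close>

type_synonym mat = "nat \<Rightarrow> nat \<Rightarrow> real"

definition mu :: real where "mu = 1"

definition mmul :: "nat \<Rightarrow> mat \<Rightarrow> mat \<Rightarrow> mat" where
  "mmul m P Q = (\<lambda>i j. \<Sum>l<m. P i l * Q l j)"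

definition transp :: "mat \<Rightarrow> mat" where
  "transp P = (\<lambda>i j. P j i)"

definition orthogonal :: "nat \<Rightarrow> mat \<Rightarrow> bool" where
  "orthogonal K W \<longleftrightarrow>
     (\<forall>i<K. \<forall>j<K. (\<Sum>l<K. W l i * W l j) = (if i = j then 1 else 0))"

definition is_svd :: "nat \<Rightarrow> mat \<Rightarrow> mat \<Rightarrow> (nat \<Rightarrow> real) \<Rightarrow> mat \<Rightarrow> bool" where
  "is_svd K M X \<sigma> Y \<longleftrightarrow> orthogonal K X \<and> orthogonal K Y \<and> (\<forall>k<K. 0 \<le> \<sigma> k) \<and>
     (\<forall>i<K. \<forall>j<K. M i j = (\<Sum>k<K. X i k * \<sigma> k * Y j k))"

definition valid_scores :: "nat \<Rightarrow> (nat \<Rightarrow> real) \<Rightarrow> bool" where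
  "valid_scores N sc \<longleftrightarrow> (\<forall>i<N. 0 < sc i \<and> sc i \<le> 1) \<and> (\<Sum>i<N. sc i) = mu"

definition loss :: "nat \<Rightarrow> nat \<Rightarrow> nat \<Rightarrow> real \<Rightarrow> real \<Rightarrow> mat \<Rightarrow> mat \<Rightarrow>
    mat \<Rightarrow> mat \<Rightarrow> mat \<Rightarrow> mat \<Rightarrow> mat \<Rightarrow>
    (nat \<Rightarrow> real) \<Rightarrow> (nat \<Rightarrow> real) \<Rightarrow> (nat \<Rightarrow> real) \<Rightarrow> real" where
  "loss N D K \<alpha> \<beta> A C G H U V W O1 O2 O3 =
     (\<Sum>i<N. \<Sum>j<N. ln (1 / O1 i) * (A i j - mmul K G H i j)\<^sup>2)
   + \<alpha> * (\<Sum>i<N. \<Sum>d<D. ln (1 / O2 i) * (C i d - mmul K U V i d)\<^sup>2)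
   + \<beta> * (\<Sum>i<N. \<Sum>k<K. ln (1 / O3 i) * (G i k - mmul K U (transp W) i k)\<^sup>2)"

definition str_row :: "nat \<Rightarrow> nat \<Rightarrow> mat \<Rightarrow> mat \<Rightarrow> mat \<Rightarrow> nat \<Rightarrow> real" where
  "str_row N K A G H i = (\<Sum>j<N. (A i j - mmul K G H i j)\<^sup>2)"

definition attr_row :: "nat \<Rightarrow> nat \<Rightarrow> mat \<Rightarrow> mat \<Rightarrow> mat \<Rightarrow> nat \<Rightarrow> real" where
  "attr_row D K C U V i = (\<Sum>d<D. (C i d - mmul K U V i d)\<^sup>2)"

definition dis_row :: "nat \<Rightarrow> mat \<Rightarrow> mat \<Rightarrow> mat \<Rightarrow> nat \<Rightarrow> real" where
  "dis_row K G U W i = (\<Sum>k<K. (G i k - mmul K U (transp W) i k)\<^sup>2)"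

definition new_score :: "nat \<Rightarrow> (nat \<Rightarrow> real) \<Rightarrow> nat \<Rightarrow> real" where
  "new_score N r i = mu * r i / (\<Sum>i'<N. r i')"

datatype coord = CG nat nat | CH nat nat | CU nat nat | CV nat nat

definition coords :: "nat \<Rightarrow> nat \<Rightarrow> nat \<Rightarrow> coord set" where
  "coords N D K =
     {CG i k | i k. i < N \<and> k < K} \<union> {CH k j | k j. k < K \<and> j < N} \<union>
     {CU i k | i k. i < N \<and> k < K} \<union> {CV k d | k d. k < K \<and> d < D}"

type_synonym state = "mat \<times> mat \<times> mat \<times> mat"

fun upd :: "coord \<Rightarrow> real \<Rightarrow> state \<Rightarrow> state" where
  "upd (CG a b) t (G, H, U, V) = (G(a := (G a)(b := t)), H, U, V)"
| "upd (CH a b) t (G, H, U, V) = (G, H(a := (H a)(b := t)), U, V)"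
| "upd (CU a b) t (G, H, U, V) = (G, H, U(a := (U a)(b := t)), V)"
| "upd (CV a b) t (G, H, U, V) = (G, H, U, V(a := (V a)(b := t)))"

text \<open>Step (ii): a pass of exact coordinate minimisation over every entry of G,H,U,V
  exactly once (in the order given by the list cs), starting in s0 and ending in s1;
  f is L as a function of (G,H,U,V) with W and O fixed.\<close>
definition coord_pass :: "(state \<Rightarrow> real) \<Rightarrow> coord set \<Rightarrow> state \<Rightarrow> state \<Rightarrow> bool" where
  "coord_pass f Cs s0 s1 \<longleftrightarrow>
     (\<exists>cs ss. distinct cs \<and> set cs = Cs \<and> length ss = Suc (length cs) \<and>
        ss ! 0 = s0 \<and> ss ! length cs = s1 \<and>
        (\<forall>n < length cs. \<exists>t. ss ! Suc n = upd (cs ! n) t (ss ! n) \<and>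
            (\<forall>s. f (upd (cs ! n) t (ss ! n)) \<le> f (upd (cs ! n) s (ss ! n)))))"

end

theory Submission
  imports Defs
begin

text \<open>Each of the three updates minimises the loss over its own block of variables with the
  others fixed. (i) With weights \<open>w\<^sub>i = ln (1 / O\<^sub>3\<^sub>i)\<close>, the disagreement loss as a function of an
  orthogonal \<open>W\<close> is a constant minus \<open>2 \<langle>M, W\<rangle>\<close> with \<open>M = G\<^sup>T diag(w) U = X \<Sigma> Y\<^sup>T\<close>, and
  \<open>\<langle>M, W\<rangle> = \<Sigma>\<^sub>m \<sigma>\<^sub>m (X\<^sup>T W Y)\<^sub>m\<^sub>m \<le> \<Sigma>\<^sub>m \<sigma>\<^sub>m = \<langle>M, X Y\<^sup>T\<rangle>\<close> (orthogonal Procrustes).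
  (ii) An exact coordinate minimisation never increases the loss.
  (iii) For fixed residuals \<open>r\<^sub>i > 0\<close>, Gibbs' inequality shows that \<open>\<Sigma>\<^sub>i r\<^sub>i ln (1 / O\<^sub>i)\<close> is
  minimised over the simplex by \<open>O\<^sub>i = r\<^sub>i / \<Sigma>\<^sub>i' r\<^sub>i'\<close>.\<close>

lemma two_sum_mult_le_sum_squares:
  fixes a b :: "nat \<Rightarrow> real"
  shows "2 * (\<Sum>k<K. a k * b k) \<le> (\<Sum>k<K. (a k)\<^sup>2) + (\<Sum>k<K. (b k)\<^sup>2)"
proof -
  have "0 \<le> (\<Sum>k<K. (a k - b k)\<^sup>2)" by (simp add: sum_nonneg)
  also have "\<dots> = (\<Sum>k<K. (a k)\<^sup>2) + (\<Sum>k<K. (b k)\<^sup>2) - 2 * (\<Sum>k<K. a k * b k)"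
    by (simp add: power2_diff sum.distrib sum_subtractf sum_distrib_left mult_ac)
  finally show ?thesis by simp
qed

lemma orthogonal_column_sum_squares:
  assumes "orthogonal K Q" "m < K"
  shows "(\<Sum>k<K. (Q k m)\<^sup>2) = 1"
  using assms by (simp add: orthogonal_def power2_eq_square)

lemma orthogonal_preserves_sum_squares:
  assumes "orthogonal K Q"
  shows "(\<Sum>k<K. (\<Sum>m<K. Q k m * c m)\<^sup>2) = (\<Sum>m<K. (c m)\<^sup>2)"
proof -
  have "(\<Sum>k<K. (\<Sum>m<K. Q k m * c m)\<^sup>2) = (\<Sum>k<K. \<Sum>m<K. \<Sum>m'<K. (Q k m * c m) * (Q k m' * c m'))"
    by (simp add: power2_eq_square sum_product)
  also have "\<dots> = (\<Sum>m<K. \<Sum>k<K. \<Sum>m'<K. (Q k m * c m) * (Q k m' * c m'))"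
    by (rule sum.swap)
  also have "\<dots> = (\<Sum>m<K. \<Sum>m'<K. \<Sum>k<K. (Q k m * c m) * (Q k m' * c m'))"
    by (rule sum.cong[OF refl], rule sum.swap)
  also have "\<dots> = (\<Sum>m<K. \<Sum>m'<K. c m * c m' * (\<Sum>k<K. Q k m * Q k m'))"
    by (simp add: sum_distrib_left mult_ac)
  also have "\<dots> = (\<Sum>m<K. \<Sum>m'<K. c m * c m' * (if m = m' then 1 else 0))"
    using assms by (auto simp: orthogonal_def intro!: sum.cong)
  also have "\<dots> = (\<Sum>m<K. (c m)\<^sup>2)"
    by (simp add: power2_eq_square if_distrib cong: if_cong)
  finally show ?thesis .
qed

text \<open>Bessel's inequality for the columns of \<open>Y\<close>; only \<open>Y\<^sup>T Y = I\<close> is available, not \<open>Y Y\<^sup>T = I\<close>.\<close>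

lemma orthogonal_transp_sum_squares_le:
  assumes "orthogonal K Y"
  shows "(\<Sum>m<K. (\<Sum>l<K. Y l m * u l)\<^sup>2) \<le> (\<Sum>l<K. (u l)\<^sup>2)"
proof -
  define c where "c m = (\<Sum>l<K. Y l m * u l)" for m
  have "0 \<le> (\<Sum>l<K. (u l - (\<Sum>m<K. Y l m * c m))\<^sup>2)" by (simp add: sum_nonneg)
  also have "\<dots> = (\<Sum>l<K. (u l)\<^sup>2) - 2 * (\<Sum>l<K. u l * (\<Sum>m<K. Y l m * c m))
                   + (\<Sum>l<K. (\<Sum>m<K. Y l m * c m)\<^sup>2)"
    by (simp add: power2_diff sum.distrib sum_subtractf sum_distrib_left mult_ac)
  also have "(\<Sum>l<K. u l * (\<Sum>m<K. Y l m * c m)) = (\<Sum>m<K. (c m)\<^sup>2)"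
  proof -
    have "(\<Sum>l<K. u l * (\<Sum>m<K. Y l m * c m)) = (\<Sum>l<K. \<Sum>m<K. c m * (Y l m * u l))"
      by (simp add: sum_distrib_left mult_ac)
    also have "\<dots> = (\<Sum>m<K. \<Sum>l<K. c m * (Y l m * u l))" by (rule sum.swap)
    also have "\<dots> = (\<Sum>m<K. (c m)\<^sup>2)" by (simp add: c_def power2_eq_square sum_distrib_left)
    finally show ?thesis .
  qed
  also have "(\<Sum>l<K. (\<Sum>m<K. Y l m * c m)\<^sup>2) = (\<Sum>m<K. (c m)\<^sup>2)"
    using orthogonal_preserves_sum_squares[OF assms] .
  finally show ?thesis by (simp add: c_def)
qed

lemma orthogonal_polar_factor_sum_squares_le:
  assumes X: "orthogonal K X" and Y: "orthogonal K Y"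
  shows "(\<Sum>k<K. (\<Sum>l<K. mmul K X (transp Y) k l * u l)\<^sup>2) \<le> (\<Sum>l<K. (u l)\<^sup>2)"
proof -
  have "(\<Sum>l<K. mmul K X (transp Y) k l * u l) = (\<Sum>m<K. X k m * (\<Sum>l<K. Y l m * u l))" for k
  proof -
    have "(\<Sum>l<K. mmul K X (transp Y) k l * u l) = (\<Sum>l<K. \<Sum>m<K. X k m * (Y l m * u l))"
      by (simp add: mmul_def transp_def sum_distrib_right sum_distrib_left mult_ac)
    also have "\<dots> = (\<Sum>m<K. \<Sum>l<K. X k m * (Y l m * u l))" by (rule sum.swap)
    finally show ?thesis by (simp add: sum_distrib_left)
  qed
  then have "(\<Sum>k<K. (\<Sum>l<K. mmul K X (transp Y) k l * u l)\<^sup>2) = (\<Sum>m<K. (\<Sum>l<K. Y l m * u l)\<^sup>2)"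
    using orthogonal_preserves_sum_squares[OF X] by simp
  also have "\<dots> \<le> (\<Sum>l<K. (u l)\<^sup>2)" by (rule orthogonal_transp_sum_squares_le[OF Y])
  finally show ?thesis .
qed

lemma orthogonal_conj_diag_le_1:
  assumes W: "orthogonal K W" and X: "orthogonal K X" and Y: "orthogonal K Y" and m: "m < K"
  shows "(\<Sum>k<K. \<Sum>l<K. X k m * W k l * Y l m) \<le> 1"
proof -
  have split: "(\<Sum>k<K. \<Sum>l<K. X k m * W k l * Y l m) = (\<Sum>k<K. X k m * (\<Sum>l<K. W k l * Y l m))"
    by (simp add: sum_distrib_left mult_ac)
  have "2 * (\<Sum>k<K. X k m * (\<Sum>l<K. W k l * Y l m))
      \<le> (\<Sum>k<K. (X k m)\<^sup>2) + (\<Sum>k<K. (\<Sum>l<K. W k l * Y l m)\<^sup>2)"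
    by (rule two_sum_mult_le_sum_squares)
  also have "(\<Sum>k<K. (\<Sum>l<K. W k l * Y l m)\<^sup>2) = (\<Sum>l<K. (Y l m)\<^sup>2)"
    by (rule orthogonal_preserves_sum_squares[OF W])
  finally show ?thesis
    using split orthogonal_column_sum_squares[OF X m] orthogonal_column_sum_squares[OF Y m]
    by simp
qed

lemma polar_factor_conj_diag_eq_1:
  assumes X: "orthogonal K X" and Y: "orthogonal K Y" and m: "m < K"
  shows "(\<Sum>k<K. \<Sum>l<K. X k m * mmul K X (transp Y) k l * Y l m) = 1"
proof -
  have "(\<Sum>k<K. \<Sum>l<K. X k m * mmul K X (transp Y) k l * Y l m)
      = (\<Sum>k<K. \<Sum>l<K. \<Sum>j<K. (X k m * X k j) * (Y l j * Y l m))"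
    by (simp add: mmul_def transp_def sum_distrib_left sum_distrib_right mult_ac)
  also have "\<dots> = (\<Sum>k<K. \<Sum>j<K. \<Sum>l<K. (X k m * X k j) * (Y l j * Y l m))"
    by (rule sum.cong[OF refl], rule sum.swap)
  also have "\<dots> = (\<Sum>j<K. \<Sum>k<K. \<Sum>l<K. (X k m * X k j) * (Y l j * Y l m))"
    by (rule sum.swap)
  also have "\<dots> = (\<Sum>j<K. (\<Sum>k<K. X k m * X k j) * (\<Sum>l<K. Y l j * Y l m))"
    by (simp add: sum_product)
  also have "\<dots> = (\<Sum>j<K. (if m = j then 1 else 0) * (if j = m then 1 else 0))"
    using X Y m by (auto simp: orthogonal_def intro!: sum.cong)
  also have "\<dots> = 1" using m by (simp add: if_distrib cong: if_cong)
  finally show ?thesis .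
qed

lemma frobenius_inner_svd:
  fixes M W X Y :: mat
  assumes "\<forall>k<K. \<forall>l<K. M k l = (\<Sum>m<K. X k m * \<sigma> m * Y l m)"
  shows "(\<Sum>k<K. \<Sum>l<K. M k l * W k l) = (\<Sum>m<K. \<sigma> m * (\<Sum>k<K. \<Sum>l<K. X k m * W k l * Y l m))"
proof -
  have "(\<Sum>k<K. \<Sum>l<K. M k l * W k l) = (\<Sum>k<K. \<Sum>l<K. \<Sum>m<K. \<sigma> m * (X k m * W k l * Y l m))"
    using assms by (auto simp: sum_distrib_right sum_distrib_left mult_ac intro!: sum.cong)
  also have "\<dots> = (\<Sum>k<K. \<Sum>m<K. \<Sum>l<K. \<sigma> m * (X k m * W k l * Y l m))"
    by (rule sum.cong[OF refl], rule sum.swap)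
  also have "\<dots> = (\<Sum>m<K. \<Sum>k<K. \<Sum>l<K. \<sigma> m * (X k m * W k l * Y l m))"
    by (rule sum.swap)
  also have "\<dots> = (\<Sum>m<K. \<sigma> m * (\<Sum>k<K. \<Sum>l<K. X k m * W k l * Y l m))"
    by (simp add: sum_distrib_left)
  finally show ?thesis .
qed

lemma frobenius_inner_svd_le:
  assumes W: "orthogonal K W" and svd: "is_svd K M X \<sigma> Y"
  shows "(\<Sum>k<K. \<Sum>l<K. M k l * W k l) \<le> (\<Sum>k<K. \<Sum>l<K. M k l * mmul K X (transp Y) k l)"
proof -
  from svd have X: "orthogonal K X" and Y: "orthogonal K Y" and \<sigma>: "\<forall>k<K. 0 \<le> \<sigma> k"
    and M: "\<forall>k<K. \<forall>l<K. M k l = (\<Sum>m<K. X k m * \<sigma> m * Y l m)"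
    by (auto simp: is_svd_def)
  have "(\<Sum>k<K. \<Sum>l<K. M k l * W k l) = (\<Sum>m<K. \<sigma> m * (\<Sum>k<K. \<Sum>l<K. X k m * W k l * Y l m))"
    by (rule frobenius_inner_svd[OF M])
  also have "\<dots> \<le> (\<Sum>m<K. \<sigma> m * 1)"
    using \<sigma> orthogonal_conj_diag_le_1[OF W X Y] by (intro sum_mono mult_left_mono) auto
  also have "\<dots> = (\<Sum>m<K. \<sigma> m * (\<Sum>k<K. \<Sum>l<K. X k m * mmul K X (transp Y) k l * Y l m))"
    using polar_factor_conj_diag_eq_1[OF X Y] by simp
  also have "\<dots> = (\<Sum>k<K. \<Sum>l<K. M k l * mmul K X (transp Y) k l)"
    by (rule frobenius_inner_svd[OF M, symmetric])
  finally show ?thesis .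
qed

lemma mmul_transp_sqrt_weighted:
  assumes "\<forall>i<N. 0 \<le> w i"
  shows "mmul N (transp (\<lambda>i k. sqrt (w i) * G i k)) (\<lambda>i k. sqrt (w i) * U i k)
       = (\<lambda>k l. \<Sum>i<N. w i * G i k * U i l)"
proof -
  have "sqrt (w i) * G i k * (sqrt (w i) * U i l) = w i * G i k * U i l" if "i < N" for i k l
    using assms that real_sqrt_mult_self[of "w i"] by (simp add: mult_ac)
  then show ?thesis unfolding mmul_def transp_def by (intro ext sum.cong) auto
qed

lemma weighted_residual_expand:
  fixes w :: "nat \<Rightarrow> real"
  shows "(\<Sum>i<N. \<Sum>k<K. w i * (G i k - mmul K U (transp W) i k)\<^sup>2)
    = (\<Sum>i<N. w i * (\<Sum>k<K. (G i k)\<^sup>2))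
      - 2 * (\<Sum>k<K. \<Sum>l<K. (\<Sum>i<N. w i * G i k * U i l) * W k l)
      + (\<Sum>i<N. w i * (\<Sum>k<K. (\<Sum>l<K. W k l * U i l)\<^sup>2))"
proof -
  have UWt: "mmul K U (transp W) i k = (\<Sum>l<K. W k l * U i l)" for i k
    by (simp add: mmul_def transp_def mult_ac)
  have cross: "(\<Sum>i<N. \<Sum>k<K. w i * G i k * (\<Sum>l<K. W k l * U i l))
      = (\<Sum>k<K. \<Sum>l<K. (\<Sum>i<N. w i * G i k * U i l) * W k l)"
  proof -
    have "(\<Sum>i<N. \<Sum>k<K. w i * G i k * (\<Sum>l<K. W k l * U i l))
        = (\<Sum>i<N. \<Sum>k<K. \<Sum>l<K. w i * G i k * U i l * W k l)"
      by (simp add: sum_distrib_left mult_ac)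
    also have "\<dots> = (\<Sum>k<K. \<Sum>i<N. \<Sum>l<K. w i * G i k * U i l * W k l)"
      by (rule sum.swap)
    also have "\<dots> = (\<Sum>k<K. \<Sum>l<K. \<Sum>i<N. w i * G i k * U i l * W k l)"
      by (rule sum.cong[OF refl], rule sum.swap)
    finally show ?thesis by (simp add: sum_distrib_right)
  qed
  have "(\<Sum>i<N. \<Sum>k<K. w i * (G i k - mmul K U (transp W) i k)\<^sup>2)
     = (\<Sum>i<N. \<Sum>k<K. w i * (G i k)\<^sup>2 - 2 * (w i * G i k * (\<Sum>l<K. W k l * U i l))
                       + w i * (\<Sum>l<K. W k l * U i l)\<^sup>2)"
    by (simp add: UWt power2_diff algebra_simps)
  also have "\<dots> = (\<Sum>i<N. w i * (\<Sum>k<K. (G i k)\<^sup>2))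
      - 2 * (\<Sum>i<N. \<Sum>k<K. w i * G i k * (\<Sum>l<K. W k l * U i l))
      + (\<Sum>i<N. w i * (\<Sum>k<K. (\<Sum>l<K. W k l * U i l)\<^sup>2))"
    by (simp add: sum.distrib sum_subtractf sum_distrib_left)
  finally show ?thesis using cross by simp
qed

text \<open>\<open>X Y\<^sup>T\<close> is in fact orthogonal, but the contraction bound suffices and avoids deriving
  \<open>X X\<^sup>T = I\<close> from \<open>X\<^sup>T X = I\<close>.\<close>

lemma weighted_procrustes_le:
  fixes w :: "nat \<Rightarrow> real"
  assumes W: "orthogonal K W" and w: "\<forall>i<N. 0 \<le> w i"
    and svd: "is_svd K (mmul N (transp (\<lambda>i k. sqrt (w i) * G i k)) (\<lambda>i k. sqrt (w i) * U i k)) X \<sigma> Y"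
  shows "(\<Sum>i<N. \<Sum>k<K. w i * (G i k - mmul K U (transp (mmul K X (transp Y))) i k)\<^sup>2)
       \<le> (\<Sum>i<N. \<Sum>k<K. w i * (G i k - mmul K U (transp W) i k)\<^sup>2)"
proof -
  define W' where "W' = mmul K X (transp Y)"
  define M where "M k l = (\<Sum>i<N. w i * G i k * U i l)" for k l
  from svd have X: "orthogonal K X" and Y: "orthogonal K Y" by (auto simp: is_svd_def)
  have "is_svd K M X \<sigma> Y"
    using svd by (simp add: mmul_transp_sqrt_weighted[OF w] M_def[abs_def])
  then have cross: "(\<Sum>k<K. \<Sum>l<K. M k l * W k l) \<le> (\<Sum>k<K. \<Sum>l<K. M k l * W' k l)"
    unfolding W'_def by (rule frobenius_inner_svd_le[OF W])
  have "(\<Sum>k<K. (\<Sum>l<K. W' k l * U i l)\<^sup>2) \<le> (\<Sum>k<K. (\<Sum>l<K. W k l * U i l)\<^sup>2)" for i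
    using orthogonal_polar_factor_sum_squares_le[OF X Y, of "U i"]
      orthogonal_preserves_sum_squares[OF W, of "U i"]
    by (simp add: W'_def)
  then have quad: "(\<Sum>i<N. w i * (\<Sum>k<K. (\<Sum>l<K. W' k l * U i l)\<^sup>2))
                 \<le> (\<Sum>i<N. w i * (\<Sum>k<K. (\<Sum>l<K. W k l * U i l)\<^sup>2))"
    using w by (intro sum_mono, intro mult_left_mono) auto
  show ?thesis
    using cross quad unfolding W'_def[symmetric] weighted_residual_expand M_def by linarith
qed

fun coord_val :: "coord \<Rightarrow> state \<Rightarrow> real" where
  "coord_val (CG a b) (G, H, U, V) = G a b"
| "coord_val (CH a b) (G, H, U, V) = H a b"
| "coord_val (CU a b) (G, H, U, V) = U a b"
| "coord_val (CV a b) (G, H, U, V) = V a b"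

lemma upd_coord_val: "upd c (coord_val c s) s = s"
  by (cases s; cases c) auto

lemma coord_pass_nonincreasing:
  assumes "coord_pass f Cs s0 s1"
  shows "f s1 \<le> f s0"
proof -
  from assms obtain cs ss where s0: "ss ! 0 = s0" and s1: "ss ! length cs = s1"
    and steps: "\<forall>n < length cs. \<exists>t. ss ! Suc n = upd (cs ! n) t (ss ! n) \<and>
            (\<forall>s. f (upd (cs ! n) t (ss ! n)) \<le> f (upd (cs ! n) s (ss ! n)))"
    unfolding coord_pass_def by blast
  have step: "f (ss ! Suc n) \<le> f (ss ! n)" if "n < length cs" for n
  proof -
    from steps that obtain t where next_state: "ss ! Suc n = upd (cs ! n) t (ss ! n)"
      and t_min: "\<forall>s. f (upd (cs ! n) t (ss ! n)) \<le> f (upd (cs ! n) s (ss ! n))" by blast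
    have "f (upd (cs ! n) t (ss ! n)) \<le> f (upd (cs ! n) (coord_val (cs ! n) (ss ! n)) (ss ! n))"
      using t_min by blast
    then show ?thesis by (simp add: next_state upd_coord_val)
  qed
  have "f (ss ! n) \<le> f (ss ! 0)" if "n \<le> length cs" for n
    using that
  proof (induction n)
    case (Suc n)
    then show ?case using step[of n] by simp
  qed simp
  then show ?thesis using s0 s1 by blast
qed

lemma gibbs_new_score_le:
  assumes N: "0 < N" and r: "\<forall>i<N. 0 < r i" and P: "valid_scores N P"
  shows "(\<Sum>i<N. ln (1 / new_score N r i) * r i) \<le> (\<Sum>i<N. ln (1 / P i) * r i)"
proof -
  define R where "R = (\<Sum>i<N. r i)"
  have R: "0 < R" unfolding R_def using N r by (intro sum_pos) auto
  have P_pos: "\<forall>i<N. 0 < P i" and P_sum: "(\<Sum>i<N. P i) = 1"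
    using P by (auto simp: valid_scores_def mu_def)
  have "ln (1 / new_score N r i) * r i - ln (1 / P i) * r i \<le> R * P i - r i" if i: "i < N" for i
  proof -
    have ri: "0 < r i" and Pi: "0 < P i" using r P_pos i by auto
    have "ln (1 / new_score N r i) * r i - ln (1 / P i) * r i = r i * ln (P i * R / r i)"
      using ri Pi R by (simp add: new_score_def mu_def R_def ln_div ln_mult algebra_simps)
    also have "\<dots> \<le> r i * (P i * R / r i - 1)"
      using ri Pi R by (intro mult_left_mono ln_le_minus_one) auto
    also have "\<dots> = R * P i - r i" using ri by (simp add: field_simps)
    finally show ?thesis .
  qed
  then have "(\<Sum>i<N. ln (1 / new_score N r i) * r i - ln (1 / P i) * r i) \<le> (\<Sum>i<N. R * P i - r i)"
    by (intro sum_mono) auto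
  also have "\<dots> = 0" by (simp add: sum_subtractf sum_distrib_left[symmetric] P_sum R_def)
  finally show ?thesis by (simp add: sum_subtractf)
qed

lemma loss_row_form:
  "loss N D K \<alpha> \<beta> A C G H U V W O1 O2 O3 =
     (\<Sum>i<N. ln (1 / O1 i) * str_row N K A G H i)
   + \<alpha> * (\<Sum>i<N. ln (1 / O2 i) * attr_row D K C U V i)
   + \<beta> * (\<Sum>i<N. ln (1 / O3 i) * dis_row K G U W i)"
  by (simp add: loss_def str_row_def attr_row_def dis_row_def sum_distrib_left)

lemma loss_new_scores_le:
  assumes "0 < N" and "0 \<le> \<alpha>" and "0 \<le> \<beta>"
    and "valid_scores N O1" and "valid_scores N O2" and "valid_scores N O3"
    and "\<forall>i<N. str_row N K A G H i > 0"
    and "\<forall>i<N. attr_row D K C U V i > 0"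
    and "\<forall>i<N. dis_row K G U W i > 0"
  shows "loss N D K \<alpha> \<beta> A C G H U V W
           (new_score N (str_row N K A G H))
           (new_score N (attr_row D K C U V))
           (new_score N (dis_row K G U W))
         \<le> loss N D K \<alpha> \<beta> A C G H U V W O1 O2 O3"
  unfolding loss_row_form
  using assms gibbs_new_score_le[OF \<open>0 < N\<close>]
  by (intro add_mono mult_left_mono) auto

lemma loss_procrustes_le:
  assumes "0 \<le> \<beta>" and "orthogonal K W" and "valid_scores N O3"
    and "is_svd K
           (mmul N (transp (\<lambda>i k. sqrt (ln (1 / O3 i)) * G i k))
                   (\<lambda>i k. sqrt (ln (1 / O3 i)) * U i k)) X \<sigma> Y"
  shows "loss N D K \<alpha> \<beta> A C G H U V (mmul K X (transp Y)) O1 O2 O3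
       \<le> loss N D K \<alpha> \<beta> A C G H U V W O1 O2 O3"
proof -
  have "\<forall>i<N. 0 \<le> ln (1 / O3 i)"
    using assms(3) by (auto simp: valid_scores_def)
  then show ?thesis
    unfolding loss_def
    using weighted_procrustes_le[OF assms(2) _ assms(4)] assms(1)
    by (simp add: mult_left_mono)
qed

theorem mainTheorem1:
  fixes N D K :: nat and \<alpha> \<beta> :: real and A C :: mat
    and G H U V W :: mat and O1 O2 O3 :: "nat \<Rightarrow> real"
    and X Y :: mat and \<sigma> :: "nat \<Rightarrow> real"
    and G' H' U' V' :: mat
  assumes "K < min N D" and "\<alpha> > 0" and "\<beta> > 0"
    and "orthogonal K W"
    and "valid_scores N O1" and "valid_scores N O2" and "valid_scores N O3"
    \<comment> \<open>(i) SVD of Gbar^T Ubar; new W is X Y^T\<close>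
    and "is_svd K
           (mmul N (transp (\<lambda>i k. sqrt (ln (1 / O3 i)) * G i k))
                   (\<lambda>i k. sqrt (ln (1 / O3 i)) * U i k)) X \<sigma> Y"
    \<comment> \<open>(ii) coordinate-wise exact minimisation of L over all entries of G,H,U,V\<close>
    and "coord_pass
           (\<lambda>(Ga, Ha, Ua, Va). loss N D K \<alpha> \<beta> A C Ga Ha Ua Va (mmul K X (transp Y)) O1 O2 O3)
           (coords N D K) (G, H, U, V) (G', H', U', V')"
    \<comment> \<open>positivity of all row residuals used in (iii)\<close>
    and "\<forall>i<N. str_row N K A G' H' i > 0"
    and "\<forall>i<N. attr_row D K C U' V' i > 0"
    and "\<forall>i<N. dis_row K G' U' (mmul K X (transp Y)) i > 0"
  shows "loss N D K \<alpha> \<beta> A C G' H' U' V' (mmul K X (transp Y))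
           (new_score N (str_row N K A G' H'))
           (new_score N (attr_row D K C U' V'))
           (new_score N (dis_row K G' U' (mmul K X (transp Y))))
         \<le> loss N D K \<alpha> \<beta> A C G H U V W O1 O2 O3"
proof -
  let ?W' = "mmul K X (transp Y)"
  have "0 < N" using assms(1) by simp
  have "loss N D K \<alpha> \<beta> A C G' H' U' V' ?W'
           (new_score N (str_row N K A G' H'))
           (new_score N (attr_row D K C U' V'))
           (new_score N (dis_row K G' U' ?W'))
        \<le> loss N D K \<alpha> \<beta> A C G' H' U' V' ?W' O1 O2 O3"
    using assms(2-3,5-7,10-12) by (intro loss_new_scores_le[OF \<open>0 < N\<close>]) auto
  also have "\<dots> \<le> loss N D K \<alpha> \<beta> A C G H U V ?W' O1 O2 O3"
    using coord_pass_nonincreasing[OF assms(9)] by simp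
  also have "\<dots> \<le> loss N D K \<alpha> \<beta> A C G H U V W O1 O2 O3"
    using assms(3) by (intro loss_procrustes_le[OF _ assms(4,7,8)]) simp
  finally show ?thesis .
qed

end
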